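(* Let $\mu>0$, $L>0$, let $g:\mathbb{R}^n\to\mathbb{R}$ be $\mu$-strongly convex and $(L+\mu)$-smooth, let $h$ be proper closed convex, $\psi=g+h$, and run the ACG method (see context) from $x_0\in\mathbb{R}^n$. Then for every $j\ge0$, $$A_j\psi(y_j)\le\min_{u\in\mathbb{R}^n}\left\{A_j\Gamma_j(u)+\tfrac12\|u-x_0\|^2\right\}.$$
   Context: $\ell_g(u;x)=g(x)+\langle\nabla g(x),u-x\rangle$. ACG method: $A_0=0$, $\tau_0=1/L$, $y_0=x_0$; for $j\ge0$: $a_j=\frac{\tau_j+\sqrt{\tau_j^2+4\tau_jA_j}}{2}$, $\tau_{j+1}=\tau_j+\mu a_j/L$, $A_{j+1}=A_j+a_j$, $\tilde x_j=\frac{A_j}{A_{j+1}}y_j+\frac{a_j}{A_{j+1}}x_j$; $\tilde y_{j+1}=\mathrm{argmin}_u\{\ell_g(u;\tilde x_j)+h(u)+\frac{L+\mu}{2}\|u-\tilde x_j\|^2\}$; $y_{j+1}\in\mathrm{Argmin}\{\psi(u):u\in\{y_j,\tilde y_{j+1}\}\}$; $x_{j+1}=\frac{(L+\mu)a_j\tilde y_{j+1}-\frac{A_ja_jL}{A_{j+1}}y_j}{A_{j+1}\mu+1}$. Define $\tilde\gamma_j(u)=\ell_g(u;\tilde x_j)+h(u)+\frac\mu2\|u-\tilde x_j\|^2$, $\gamma_j(u)=\tilde\gamma_j(\tilde y_{j+1})+L\langle\tilde x_j-\tilde y_{j+1},u-\tilde y_{j+1}\rangle+\frac\mu2\|u-\tilde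 y_{j+1}\|^2$, $\Gamma_0\equiv0$, $\Gamma_{j+1}=(A_j\Gamma_j+a_j\gamma_j)/A_{j+1}$. The case $j=0$ reads $0\le\min_u\frac12\|u-x_0\|^2$. *)

theory Defs
  imports "HOL-Analysis.Analysis"
begin

definition strongly_convex :: "real \<Rightarrow> ('a::real_inner \<Rightarrow> real) \<Rightarrow> bool" where
  "strongly_convex m g \<longleftrightarrow> convex_on UNIV (\<lambda>x. g x - m / 2 * (norm x)\<^sup>2)"

definition smooth_with_grad :: "real \<Rightarrow> ('a::real_inner \<Rightarrow> real) \<Rightarrow> ('a \<Rightarrow> 'a) \<Rightarrow> bool" where
  "smooth_with_grad M g G \<longleftrightarrow>
     (\<forall>x. (g has_derivative (\<lambda>v. G x \<bullet> v)) (at x)) \<and>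
     (\<forall>x y. norm (G x - G y) \<le> M * norm (x - y))"

definition proper_closed_convex :: "('a::euclidean_space \<Rightarrow> ereal) \<Rightarrow> bool" where
  "proper_closed_convex h \<longleftrightarrow>
     (\<forall>x. h x \<noteq> -\<infinity>) \<and> (\<exists>x. h x \<noteq> \<infinity>) \<and>
     convex {(x, r::real). h x \<le> ereal r} \<and> closed {(x, r::real). h x \<le> ereal r}"

definition lin :: "('a::real_inner \<Rightarrow> real) \<Rightarrow> ('a \<Rightarrow> 'a) \<Rightarrow> 'a \<Rightarrow> 'a \<Rightarrow> real" where
  "lin g G u x = g x + G x \<bullet> (u - x)"

end

theory Submission
  imports Defs
begin

text \<open>
  The quadratic model gamma_j lies below psi: strong convexity bounds g from below by its
  linearisation at xt_j plus mu/2 ||u - xt_j||^2, and optimality of the proximal step yt_(j+1)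
  supplies the matching subgradient inequality for h. The descent lemma bounds psi(y_(j+1)) from
  above by the model's base value plus L/2 ||yt_(j+1) - xt_j||^2. The quadratic
  A_j gamma_j(y_j) + (1 + mu A_j)/2 ||u - x_j||^2 + a_j gamma_j(u) has curvature 1 + mu A_(j+1)
  and is stationary at x_(j+1); by convexity of gamma_j and the choice L a_j^2 = (1 + mu A_j) A_(j+1)
  its minimum dominates A_(j+1) psi(y_(j+1)). Induction on j then yields the stronger invariant
  A_j psi(y_j) + (1 + mu A_j)/2 ||u - x_j||^2 <= A_j Gamma_j(u) + ||u - x_0||^2 / 2.
\<close>

lemma has_real_derivative_along_line:
  assumes "\<And>x. (g has_derivative (\<lambda>v. G x \<bullet> v)) (at x)"
  shows "((\<lambda>t. g (x + t *\<^sub>R d)) has_real_derivative (G (x + t *\<^sub>R d) \<bullet> d)) (at t)"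
proof -
  have "((\<lambda>t. x + t *\<^sub>R d) has_derivative (\<lambda>s. s *\<^sub>R d)) (at t)"
    by (auto intro!: derivative_eq_intros)
  from has_derivative_compose[OF this assms] show ?thesis
    by (simp add: has_field_derivative_def mult_commute_abs)
qed

lemma smooth_with_grad_upper_bound:
  fixes g :: "'a::real_inner \<Rightarrow> real"
  assumes "smooth_with_grad M g G"
  shows "g u \<le> g x + G x \<bullet> (u - x) + M / 2 * (norm (u - x))\<^sup>2"
proof -
  define d where "d = u - x"
  have dg: "\<And>x. (g has_derivative (\<lambda>v. G x \<bullet> v)) (at x)"
    and lip: "\<And>x y. norm (G x - G y) \<le> M * norm (x - y)"
    using assms unfolding smooth_with_grad_def by auto
  define \<phi> where "\<phi> t = g (x + t *\<^sub>R d) - t * (G x \<bullet> d) - M / 2 * t\<^sup>2 * (norm d)\<^sup>2" for t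
  have "\<phi> 1 \<le> \<phi> 0"
  proof (rule DERIV_nonpos_imp_nonincreasing[of 0 1 \<phi>])
    fix t :: real assume t: "0 \<le> t" "t \<le> 1"
    have "(G (x + t *\<^sub>R d) - G x) \<bullet> d \<le> norm (G (x + t *\<^sub>R d) - G x) * norm d"
      by (rule norm_cauchy_schwarz)
    also have "\<dots> \<le> M * t * (norm d)\<^sup>2"
      using lip[of "x + t *\<^sub>R d" x] t
      by (simp add: power2_eq_square) (metis mult.assoc mult_right_mono norm_ge_zero)
    finally have "G (x + t *\<^sub>R d) \<bullet> d - G x \<bullet> d - M * t * (norm d)\<^sup>2 \<le> 0"
      by (simp add: inner_diff_left)
    moreover have "(\<phi> has_real_derivative G (x + t *\<^sub>R d) \<bullet> d - G x \<bullet> d - M * t * (norm d)\<^sup>2) (at t)"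
      unfolding \<phi>_def using has_real_derivative_along_line[OF dg]
      by (auto intro!: derivative_eq_intros simp: power2_eq_square)
    ultimately show "\<exists>y. (\<phi> has_real_derivative y) (at t) \<and> y \<le> 0" by blast
  qed simp
  then show ?thesis unfolding \<phi>_def d_def by simp
qed

lemma strongly_convex_lower_bound:
  fixes g :: "'a::real_inner \<Rightarrow> real"
  assumes sc: "strongly_convex \<mu> g" and dg: "\<And>x. (g has_derivative (\<lambda>v. G x \<bullet> v)) (at x)"
  shows "g x + G x \<bullet> (u - x) + \<mu> / 2 * (norm (u - x))\<^sup>2 \<le> g u"
proof -
  define d where "d = u - x"
  define F where "F z = g z - \<mu> / 2 * (norm z)\<^sup>2" for z
  \<comment> \<open>F along the line, with the square expanded so that it can be differentiated\<close>
  define \<phi> where "\<phi> t = g (x + t *\<^sub>R d) - \<mu> / 2 * ((norm x)\<^sup>2 + 2 * t * (x \<bullet> d) + t\<^sup>2 * (norm d)\<^sup>2)"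
    for t :: real
  have \<phi>_F: "\<phi> t = F (x + t *\<^sub>R d)" for t
    unfolding \<phi>_def F_def power2_norm_eq_inner
    by (simp add: inner_add_left inner_add_right inner_commute algebra_simps power2_eq_square)
  have F: "convex_on UNIV F" using sc unfolding strongly_convex_def F_def by simp
  have "convex_on UNIV \<phi>"
  proof (rule convex_onI)
    fix s a b :: real assume "0 < s" "s < 1"
    moreover have "x + ((1 - s) *\<^sub>R a + s *\<^sub>R b) *\<^sub>R d = (1 - s) *\<^sub>R (x + a *\<^sub>R d) + s *\<^sub>R (x + b *\<^sub>R d)"
      by (simp add: algebra_simps)
    ultimately show "\<phi> ((1 - s) *\<^sub>R a + s *\<^sub>R b) \<le> (1 - s) * \<phi> a + s * \<phi> b"
      using convex_onD[OF F, of s "x + a *\<^sub>R d" "x + b *\<^sub>R d"] by (simp add: \<phi>_F)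
  qed simp
  have "(\<phi> has_real_derivative (G x \<bullet> d - \<mu> * (x \<bullet> d))) (at 0)"
    unfolding \<phi>_def using has_real_derivative_along_line[OF dg, of x d 0]
    by (auto intro!: derivative_eq_intros)
  with \<open>convex_on UNIV \<phi>\<close> have "(G x \<bullet> d - \<mu> * (x \<bullet> d)) * (1 - 0) \<le> \<phi> 1 - \<phi> 0"
    by (intro convex_on_imp_above_tangent) auto
  then show ?thesis
    unfolding \<phi>_def d_def
    by (simp add: power2_norm_eq_inner inner_diff_left inner_diff_right inner_commute algebra_simps)
qed

lemma convex_ereal_epigraphD:
  assumes "convex {(x, r::real). h x \<le> ereal r}" "h p \<le> ereal rp" "h q \<le> ereal rq" "0 \<le> t" "t \<le> 1"
  shows "h ((1 - t) *\<^sub>R p + t *\<^sub>R q) \<le> ereal ((1 - t) * rp + t * rq)"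
proof -
  have "(1 - t) *\<^sub>R (p, rp) + t *\<^sub>R (q, rq) \<in> {(x, r). h x \<le> ereal r}"
    by (rule convexD[OF assms(1)]) (use assms in auto)
  then show ?thesis by simp
qed

lemma prox_linearized_optimality:
  fixes h :: "'a::real_inner \<Rightarrow> ereal"
  assumes epi: "convex {(x, r::real). h x \<le> ereal r}" and hz: "h z = ereal hz"
    and min: "\<And>u. ereal (lin f P z c) + h z + ereal (M / 2 * (norm (z - c))\<^sup>2)
                \<le> ereal (lin f P u c) + h u + ereal (M / 2 * (norm (u - c))\<^sup>2)"
  shows "ereal (hz + (M *\<^sub>R (c - z) - P c) \<bullet> (u - z)) \<le> h u"
proof (cases "h u")
  case MInf
  then show ?thesis using min[of u] hz by simp
next
  case (real hu)
  define e where "e = u - z"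
  define D where "D = hu - hz + P c \<bullet> e + M * ((z - c) \<bullet> e)"
  define K where "K = M / 2 * (norm e)\<^sup>2"
  \<comment> \<open>compare z with (1 - t) z + t u in the minimality of z, then let t tend to 0\<close>
  have "0 \<le> D + t * K" if t: "0 < t" "t < 1" for t
  proof -
    define v where "v = (1 - t) *\<^sub>R z + t *\<^sub>R u"
    have vc: "v - c = (z - c) + t *\<^sub>R e" unfolding v_def e_def by (simp add: algebra_simps)
    have "ereal (lin f P z c + hz + M / 2 * (norm (z - c))\<^sup>2)
        \<le> ereal (lin f P v c) + h v + ereal (M / 2 * (norm (v - c))\<^sup>2)"
      using min[of v] hz by simp
    also have "\<dots> \<le> ereal (lin f P v c) + ereal ((1 - t) * hz + t * hu) + ereal (M / 2 * (norm (v - c))\<^sup>2)"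
      using convex_ereal_epigraphD[OF epi, of z hz u hu t] hz real t unfolding v_def
      by (intro add_mono) auto
    finally have R: "lin f P z c + hz + M / 2 * (norm (z - c))\<^sup>2
        \<le> lin f P v c + ((1 - t) * hz + t * hu) + M / 2 * (norm (v - c))\<^sup>2"
      by simp
    have l: "lin f P v c = lin f P z c + t * (P c \<bullet> e)"
      unfolding lin_def vc by (simp add: inner_add_right algebra_simps)
    have n: "(norm (v - c))\<^sup>2 = (norm (z - c))\<^sup>2 + 2 * t * ((z - c) \<bullet> e) + t\<^sup>2 * (norm e)\<^sup>2"
      unfolding vc power2_norm_eq_inner
      by (simp add: inner_add_left inner_add_right inner_commute power2_eq_square)
    have "0 \<le> t * (D + t * K)"
      using R unfolding l n D_def K_def by (simp add: algebra_simps power2_eq_square)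
    with t show ?thesis by (simp add: zero_le_mult_iff)
  qed
  then have "\<forall>\<^sub>F t in at_right 0. 0 \<le> D + t * K"
    using eventually_at_right_real[of 0 1] by (auto elim: eventually_mono)
  moreover have "((\<lambda>t. D + t * K) \<longlongrightarrow> D) (at_right 0)"
    by (auto intro!: tendsto_eq_intros)
  ultimately have "0 \<le> D" by (intro tendsto_lowerbound) auto
  then show ?thesis
    unfolding D_def e_def using real by (simp add: inner_diff_left algebra_simps)
qed simp

lemma norm_sq_convex_comb_le:
  fixes p q :: "'a::real_inner"
  assumes "0 \<le> s" "0 \<le> t" "s + t = 1"
  shows "(norm (s *\<^sub>R p + t *\<^sub>R q))\<^sup>2 \<le> s * (norm p)\<^sup>2 + t * (norm q)\<^sup>2"
proof -
  have t: "t = 1 - s" using assms(3) by simp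
  have "(norm (s *\<^sub>R p + t *\<^sub>R q))\<^sup>2 + s * t * (norm (p - q))\<^sup>2 = s * (norm p)\<^sup>2 + t * (norm q)\<^sup>2"
    unfolding t power2_norm_eq_inner
    by (simp add: inner_add_left inner_add_right inner_diff_left inner_diff_right inner_commute algebra_simps)
  moreover have "0 \<le> s * t * (norm (p - q))\<^sup>2" using assms by simp
  ultimately show ?thesis by linarith
qed

text \<open>
  acg_model L mu c xt yt is the paper's model gamma_j when xt = xt_j, yt = yt_(j+1) and c is the
  value of the proximal objective tilde-gamma_j at yt_(j+1).
\<close>

definition acg_model :: "real \<Rightarrow> real \<Rightarrow> real \<Rightarrow> 'a::real_inner \<Rightarrow> 'a \<Rightarrow> 'a \<Rightarrow> real" where
  "acg_model L \<mu> c xt yt u = c + L * ((xt - yt) \<bullet> (u - yt)) + \<mu> / 2 * (norm (u - yt))\<^sup>2"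

lemma convex_on_acg_model:
  assumes "0 \<le> \<mu>"
  shows "convex_on UNIV (acg_model L \<mu> c xt yt)"
proof (rule convex_onI)
  fix t :: real and p q assume t: "0 < t" "t < 1"
  have comb: "(1 - t) *\<^sub>R p + t *\<^sub>R q - yt = (1 - t) *\<^sub>R (p - yt) + t *\<^sub>R (q - yt)"
    by (simp add: algebra_simps)
  have "(norm ((1 - t) *\<^sub>R (p - yt) + t *\<^sub>R (q - yt)))\<^sup>2
      \<le> (1 - t) * (norm (p - yt))\<^sup>2 + t * (norm (q - yt))\<^sup>2"
    using t by (intro norm_sq_convex_comb_le) auto
  then have "\<mu> / 2 * (norm ((1 - t) *\<^sub>R (p - yt) + t *\<^sub>R (q - yt)))\<^sup>2
      \<le> \<mu> / 2 * ((1 - t) * (norm (p - yt))\<^sup>2 + t * (norm (q - yt))\<^sup>2)"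
    using assms by (intro mult_left_mono) auto
  then have "acg_model L \<mu> c xt yt ((1 - t) *\<^sub>R p + t *\<^sub>R q)
      \<le> c + L * ((xt - yt) \<bullet> ((1 - t) *\<^sub>R (p - yt) + t *\<^sub>R (q - yt)))
        + \<mu> / 2 * ((1 - t) * (norm (p - yt))\<^sup>2 + t * (norm (q - yt))\<^sup>2)"
    unfolding acg_model_def comb by simp
  also have "\<dots> = (1 - t) * acg_model L \<mu> c xt yt p + t * acg_model L \<mu> c xt yt q"
    unfolding acg_model_def by (simp add: inner_add_right algebra_simps) (simp add: field_simps)
  finally show "acg_model L \<mu> c xt yt ((1 - t) *\<^sub>R p + t *\<^sub>R q)
      \<le> (1 - t) * acg_model L \<mu> c xt yt p + t * acg_model L \<mu> c xt yt q" .
qed simp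

lemma acg_model_plus_dist:
  "acg_model L \<mu> c xt yt v + L / 2 * (norm (v - xt))\<^sup>2
     = c + L / 2 * (norm (yt - xt))\<^sup>2 + (L + \<mu>) / 2 * (norm (v - yt))\<^sup>2"
proof -
  have "v - xt = (v - yt) + (yt - xt)" by simp
  then show ?thesis
    unfolding acg_model_def power2_norm_eq_inner
    by (simp add: inner_add_left inner_add_right inner_diff_left inner_diff_right inner_commute)
      (simp add: field_simps)
qed

lemma convex_estimate_lower_bound:
  fixes \<gamma> :: "'a::real_inner \<Rightarrow> real"
  assumes cvx: "convex_on UNIV \<gamma>" and m: "\<And>v. m \<le> \<gamma> v + L / 2 * (norm (v - xt))\<^sup>2"
    and A: "0 \<le> A" and a: "0 < a" and La: "L * a\<^sup>2 = \<beta> * (A + a)"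
    and xt: "xt = (A / (A + a)) *\<^sub>R y + (a / (A + a)) *\<^sub>R x"
  shows "(A + a) * m \<le> A * \<gamma> y + \<beta> / 2 * (norm (v - x))\<^sup>2 + a * \<gamma> v"
proof -
  define S where "S = A + a"
  have S: "0 < S" "A = S - a" using A a unfolding S_def by auto
  define vt where "vt = (A / S) *\<^sub>R y + (a / S) *\<^sub>R v"
  have "\<gamma> vt \<le> (A / S) * \<gamma> y + (a / S) * \<gamma> v"
    using convex_onD[OF cvx, of "a / S" y v] A a S unfolding vt_def by (simp add: diff_divide_distrib)
  then have conv: "S * \<gamma> vt \<le> A * \<gamma> y + a * \<gamma> v"
    using S(1) by (simp add: field_simps S(2))
  have "vt - xt = (a / S) *\<^sub>R (v - x)" unfolding vt_def xt S_def by (simp add: algebra_simps)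
  then have "S * (L / 2 * (norm (vt - xt))\<^sup>2) = L * a\<^sup>2 / S / 2 * (norm (v - x))\<^sup>2"
    using S a by (simp add: power_mult_distrib power2_eq_square ac_simps)
  also have "\<dots> = \<beta> / 2 * (norm (v - x))\<^sup>2"
    using S La unfolding S_def[symmetric] by simp
  finally have dist: "S * (L / 2 * (norm (vt - xt))\<^sup>2) = \<beta> / 2 * (norm (v - x))\<^sup>2" .
  have "S * m \<le> S * (\<gamma> vt + L / 2 * (norm (vt - xt))\<^sup>2)"
    using m S by simp
  also have "\<dots> \<le> A * \<gamma> y + \<beta> / 2 * (norm (v - x))\<^sup>2 + a * \<gamma> v"
    using conv dist by (simp add: distrib_left)
  finally show ?thesis unfolding S_def .
qed

lemma acg_model_expansion:
  fixes x z u :: "'a::real_inner"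
  assumes stat: "\<beta> *\<^sub>R (z - x) + (a * L) *\<^sub>R (xt - yt) + (a * \<mu>) *\<^sub>R (z - yt) = 0"
  shows "\<beta> / 2 * (norm (u - x))\<^sup>2 + a * acg_model L \<mu> c xt yt u
       = \<beta> / 2 * (norm (z - x))\<^sup>2 + a * acg_model L \<mu> c xt yt z + (\<beta> + a * \<mu>) / 2 * (norm (u - z))\<^sup>2"
proof -
  define e where "e = u - z"
  have ux: "u - x = (z - x) + e" and uy: "u - yt = (z - yt) + e" unfolding e_def by auto
  have "\<beta> / 2 * (norm (u - x))\<^sup>2 + a * acg_model L \<mu> c xt yt u
      = \<beta> / 2 * (norm (z - x))\<^sup>2 + a * acg_model L \<mu> c xt yt z + (\<beta> + a * \<mu>) / 2 * (norm e)\<^sup>2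
        + (\<beta> * ((z - x) \<bullet> e) + a * L * ((xt - yt) \<bullet> e) + a * \<mu> * ((z - yt) \<bullet> e))"
    unfolding acg_model_def ux uy power2_norm_eq_inner
    by (simp add: inner_add_left inner_add_right inner_commute) (simp add: field_simps)
  also have "\<beta> * ((z - x) \<bullet> e) + a * L * ((xt - yt) \<bullet> e) + a * \<mu> * ((z - yt) \<bullet> e) = 0"
    using arg_cong[OF stat, of "\<lambda>w. w \<bullet> e"] by (simp add: inner_add_left)
  finally show ?thesis unfolding e_def by simp
qed

lemma acg_x_stationary:
  fixes x y xt yt xn :: "'a::real_inner"
  assumes A: "0 \<le> A" and a: "0 < a" and mu: "0 \<le> \<mu>"
    and La: "L * a\<^sup>2 = (1 + \<mu> * A) * (A + a)"
    and xt: "xt = (A / (A + a)) *\<^sub>R y + (a / (A + a)) *\<^sub>R x"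
    and xn: "xn = (1 / ((A + a) * \<mu> + 1)) *\<^sub>R (((L + \<mu>) * a) *\<^sub>R yt - (A * a * L / (A + a)) *\<^sub>R y)"
  shows "(1 + \<mu> * A) *\<^sub>R (xn - x) + (a * L) *\<^sub>R (xt - yt) + (a * \<mu>) *\<^sub>R (xn - yt) = 0"
proof -
  define S where "S = A + a"
  have S: "0 < S" using A a unfolding S_def by simp
  have "(1 + \<mu> * S) *\<^sub>R xn = ((L + \<mu>) * a) *\<^sub>R yt - (A * a * L / S) *\<^sub>R y"
  proof -
    have "0 < S * \<mu> + 1" using S mu by (simp add: add_nonneg_pos)
    then have "(1 + \<mu> * S) * (1 / (S * \<mu> + 1)) = 1" by (simp add: field_simps)
    then show ?thesis unfolding xn S_def[symmetric] scaleR_scaleR by (metis scaleR_one)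
  qed
  moreover have "(a * L) *\<^sub>R xt = (A * a * L / S) *\<^sub>R y + (1 + \<mu> * A) *\<^sub>R x"
  proof -
    have "a * L * (a / S) = 1 + \<mu> * A" using La S unfolding S_def[symmetric] by (simp add: field_simps power2_eq_square)
    then show ?thesis unfolding xt S_def[symmetric] by (simp add: scaleR_add_right algebra_simps)
  qed
  ultimately show ?thesis unfolding S_def by (simp add: algebra_simps)
qed

lemma acg_step_bound:
  fixes x y xt yt xn u :: "'a::real_inner"
  assumes A: "0 \<le> A" and a: "0 < a" and mu: "0 \<le> \<mu>" and L: "0 \<le> L"
    and La: "L * a\<^sup>2 = (1 + \<mu> * A) * (A + a)"
    and xt: "xt = (A / (A + a)) *\<^sub>R y + (a / (A + a)) *\<^sub>R x"
    and xn: "xn = (1 / ((A + a) * \<mu> + 1)) *\<^sub>R (((L + \<mu>) * a) *\<^sub>R yt - (A * a * L / (A + a)) *\<^sub>R y)"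
  shows "(A + a) * (c + L / 2 * (norm (yt - xt))\<^sup>2) + (1 + \<mu> * (A + a)) / 2 * (norm (u - xn))\<^sup>2
    \<le> A * acg_model L \<mu> c xt yt y + (1 + \<mu> * A) / 2 * (norm (u - x))\<^sup>2 + a * acg_model L \<mu> c xt yt u"
proof -
  have "c + L / 2 * (norm (yt - xt))\<^sup>2 \<le> acg_model L \<mu> c xt yt v + L / 2 * (norm (v - xt))\<^sup>2" for v
    unfolding acg_model_plus_dist using L mu by simp
  from convex_estimate_lower_bound[OF convex_on_acg_model[OF mu] this A a La xt]
  have "(A + a) * (c + L / 2 * (norm (yt - xt))\<^sup>2)
      \<le> A * acg_model L \<mu> c xt yt y + (1 + \<mu> * A) / 2 * (norm (xn - x))\<^sup>2 + a * acg_model L \<mu> c xt yt xn" .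
  moreover have "(1 + \<mu> * A) / 2 * (norm (u - x))\<^sup>2 + a * acg_model L \<mu> c xt yt u
      = (1 + \<mu> * A) / 2 * (norm (xn - x))\<^sup>2 + a * acg_model L \<mu> c xt yt xn
        + (1 + \<mu> * A + a * \<mu>) / 2 * (norm (u - xn))\<^sup>2"
    by (rule acg_model_expansion[OF acg_x_stationary[OF A a mu La xt xn]])
  ultimately show ?thesis by (simp add: algebra_simps)
qed

locale acg =
  fixes \<mu> L :: real
    and g :: "'a::euclidean_space \<Rightarrow> real" and G :: "'a \<Rightarrow> 'a"
    and h \<psi> :: "'a \<Rightarrow> ereal"
    and A \<tau> a :: "nat \<Rightarrow> real"
    and x y xt yt :: "nat \<Rightarrow> 'a"
    and \<gamma> \<Gamma> :: "nat \<Rightarrow> 'a \<Rightarrow> ereal"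
    and x0 :: 'a
  assumes mu_pos: "\<mu> > 0" and L_pos: "L > 0"
    and g_sc: "strongly_convex \<mu> g"
    and g_smooth: "smooth_with_grad (L + \<mu>) g G"
    and h_pcc: "proper_closed_convex h"
    and psi_def: "\<And>u. \<psi> u = ereal (g u) + h u"
    and A0: "A 0 = 0" and tau0: "\<tau> 0 = 1 / L" and x0_def: "x 0 = x0"
    and a_def: "\<And>j. a j = (\<tau> j + sqrt ((\<tau> j)\<^sup>2 + 4 * \<tau> j * A j)) / 2"
    and tau_rec: "\<And>j. \<tau> (Suc j) = \<tau> j + \<mu> * a j / L"
    and A_rec: "\<And>j. A (Suc j) = A j + a j"
    and xt_def: "\<And>j. xt j = (A j / A (Suc j)) *\<^sub>R y j + (a j / A (Suc j)) *\<^sub>R x j"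
    and yt_min: "\<And>j u. ereal (lin g G (yt (Suc j)) (xt j)) + h (yt (Suc j))
                          + ereal ((L + \<mu>) / 2 * (norm (yt (Suc j) - xt j))\<^sup>2)
                        \<le> ereal (lin g G u (xt j)) + h u + ereal ((L + \<mu>) / 2 * (norm (u - xt j))\<^sup>2)"
    \<comment> \<open>the only property of the choice of y_(j+1) that the estimate needs\<close>
    and psi_y_le: "\<And>j. \<psi> (y (Suc j)) \<le> \<psi> (yt (Suc j))"
    and x_rec: "\<And>j. x (Suc j) = (1 / (A (Suc j) * \<mu> + 1)) *\<^sub>R
                   (((L + \<mu>) * a j) *\<^sub>R yt (Suc j) - (A j * a j * L / A (Suc j)) *\<^sub>R y j)"
    and gamma_def: "\<And>j u. \<gamma> j u =
                   ereal (lin g G (yt (Suc j)) (xt j)) + h (yt (Suc j))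
                     + ereal (\<mu> / 2 * (norm (yt (Suc j) - xt j))\<^sup>2)
                     + ereal (L * ((xt j - yt (Suc j)) \<bullet> (u - yt (Suc j)))
                              + \<mu> / 2 * (norm (u - yt (Suc j)))\<^sup>2)"
    and Gamma0: "\<And>u. \<Gamma> 0 u = 0"
    and Gamma_rec: "\<And>j u. \<Gamma> (Suc j) u =
                   (ereal (A j) * \<Gamma> j u + ereal (a j) * \<gamma> j u) / ereal (A (Suc j))"
begin

lemma a_pos_if: "0 < \<tau> j \<Longrightarrow> 0 \<le> A j \<Longrightarrow> 0 < a j"
  unfolding a_def by (simp add: add_pos_nonneg)

lemma tau_eq_A_nonneg: "\<tau> j = (1 + \<mu> * A j) / L \<and> 0 \<le> A j"
proof (induction j)
  case 0
  then show ?case using A0 tau0 by simp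
next
  case (Suc j)
  then have "0 < \<tau> j" using L_pos mu_pos by (simp add: add_pos_nonneg)
  with Suc have "0 < a j" by (simp add: a_pos_if)
  with Suc show ?case using tau_rec[of j] A_rec[of j] L_pos by (simp add: field_simps)
qed

lemma A_nonneg: "0 \<le> A j"
  using tau_eq_A_nonneg by blast

lemma tau_pos: "0 < \<tau> j"
  using tau_eq_A_nonneg[of j] L_pos mu_pos by (simp add: add_pos_nonneg)

lemma a_pos: "0 < a j"
  using a_pos_if[OF tau_pos A_nonneg] .

lemma A_Suc_pos: "0 < A (Suc j)"
  using A_nonneg[of j] a_pos[of j] A_rec[of j] by simp

lemma L_a_sq: "L * (a j)\<^sup>2 = (1 + \<mu> * A j) * A (Suc j)"
proof -
  define s where "s = sqrt ((\<tau> j)\<^sup>2 + 4 * \<tau> j * A j)"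
  have "s\<^sup>2 = (\<tau> j)\<^sup>2 + 4 * \<tau> j * A j"
    unfolding s_def using tau_pos[of j] A_nonneg[of j] by simp
  moreover have a: "a j = (\<tau> j + s) / 2" unfolding s_def a_def ..
  ultimately have "(a j)\<^sup>2 = \<tau> j * (a j + A j)"
    unfolding a by (simp add: power2_eq_square field_simps)
  then show ?thesis using tau_eq_A_nonneg[of j] L_pos A_rec[of j] by simp
qed

lemma h_yt_finite: "\<exists>r. h (yt (Suc j)) = ereal r"
proof -
  obtain u where u: "h u \<noteq> \<infinity>" and not_MInf: "\<And>v. h v \<noteq> -\<infinity>"
    using h_pcc unfolding proper_closed_convex_def by blast
  have "ereal (lin g G u (xt j)) + h u + ereal ((L + \<mu>) / 2 * (norm (u - xt j))\<^sup>2) \<noteq> \<infinity>"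
    using u not_MInf[of u] by (cases "h u") auto
  then have "h (yt (Suc j)) \<noteq> \<infinity>"
    using yt_min[of j u] by auto
  with not_MInf show ?thesis by (cases "h (yt (Suc j))") auto
qed

text \<open>The real_of_ereal is harmless: h is finite at yt_(j+1) by h_yt_finite.\<close>

definition prox_value :: "nat \<Rightarrow> real" where
  "prox_value j = lin g G (yt (Suc j)) (xt j) + real_of_ereal (h (yt (Suc j)))
     + \<mu> / 2 * (norm (yt (Suc j) - xt j))\<^sup>2"

abbreviation model :: "nat \<Rightarrow> 'a \<Rightarrow> real" where
  "model j \<equiv> acg_model L \<mu> (prox_value j) (xt j) (yt (Suc j))"

lemma gamma_eq: "\<gamma> j u = ereal (model j u)"
  using h_yt_finite[of j] unfolding gamma_def acg_model_def prox_value_def by auto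

lemma model_le_psi: "ereal (model j u) \<le> \<psi> u"
proof -
  obtain r where r: "h (yt (Suc j)) = ereal r" using h_yt_finite by blast
  have "convex {(x, r::real). h x \<le> ereal r}"
    using h_pcc unfolding proper_closed_convex_def by blast
  from prox_linearized_optimality[OF this r yt_min]
  have prox: "ereal (r + ((L + \<mu>) *\<^sub>R (xt j - yt (Suc j)) - G (xt j)) \<bullet> (u - yt (Suc j))) \<le> h u" .
  have tangent: "g (xt j) + G (xt j) \<bullet> (u - xt j) + \<mu> / 2 * (norm (u - xt j))\<^sup>2 \<le> g u"
    using strongly_convex_lower_bound[OF g_sc] g_smooth unfolding smooth_with_grad_def by blast
  have "model j u = (g (xt j) + G (xt j) \<bullet> (u - xt j) + \<mu> / 2 * (norm (u - xt j))\<^sup>2)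
      + (r + ((L + \<mu>) *\<^sub>R (xt j - yt (Suc j)) - G (xt j)) \<bullet> (u - yt (Suc j)))"
  proof -
    have "u - xt j = (u - yt (Suc j)) + (yt (Suc j) - xt j)" by simp
    then show ?thesis
      unfolding acg_model_def prox_value_def lin_def r power2_norm_eq_inner
      by (simp add: inner_add_left inner_add_right inner_diff_left inner_diff_right inner_commute)
        (simp add: field_simps)
  qed
  then have "ereal (model j u) \<le> ereal (g u) + h u"
    using add_mono[OF ereal_less_eq(3)[THEN iffD2, OF tangent] prox] by simp
  then show ?thesis unfolding psi_def .
qed

lemma psi_y_Suc_le: "\<psi> (y (Suc j)) \<le> ereal (prox_value j + L / 2 * (norm (yt (Suc j) - xt j))\<^sup>2)"
proof -
  obtain r where r: "h (yt (Suc j)) = ereal r" using h_yt_finite by blast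
  have "g (yt (Suc j)) \<le> lin g G (yt (Suc j)) (xt j) + (L + \<mu>) / 2 * (norm (yt (Suc j) - xt j))\<^sup>2"
    unfolding lin_def by (rule smooth_with_grad_upper_bound[OF g_smooth])
  then have "\<psi> (yt (Suc j)) \<le> ereal (prox_value j + L / 2 * (norm (yt (Suc j) - xt j))\<^sup>2)"
    unfolding psi_def prox_value_def r by (simp add: field_simps)
  with psi_y_le show ?thesis by (rule order_trans)
qed

primrec Gamma_real :: "nat \<Rightarrow> 'a \<Rightarrow> real" where
  "Gamma_real 0 u = 0"
| "Gamma_real (Suc j) u = (A j * Gamma_real j u + a j * model j u) / A (Suc j)"

lemma Gamma_eq: "\<Gamma> j u = ereal (Gamma_real j u)"
proof (induction j)
  case 0
  then show ?case by (simp add: Gamma0 zero_ereal_def)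
next
  case (Suc j)
  then show ?case using A_Suc_pos[of j] by (simp add: Gamma_rec gamma_eq)
qed

lemma estimate_invariant:
  "ereal (A j) * \<psi> (y j) + ereal ((1 + \<mu> * A j) / 2 * (norm (u - x j))\<^sup>2)
     \<le> ereal (A j * Gamma_real j u + (norm (u - x0))\<^sup>2 / 2)"
proof (induction j arbitrary: u)
  case 0
  \<comment> \<open>psi (y 0) may be infinite, but ereal 0 * \<infinity> = 0\<close>
  then show ?case by (simp add: A0 x0_def zero_ereal_def[symmetric])
next
  case (Suc j)
  have "ereal (A j * model j (y j)) \<le> ereal (A j) * \<psi> (y j)"
    using ereal_mult_left_mono[OF model_le_psi, of "ereal (A j)"] A_nonneg[of j] by simp
  then have "ereal (A j * model j (y j)) + ereal ((1 + \<mu> * A j) / 2 * (norm (u - x j))\<^sup>2)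
      \<le> ereal (A j) * \<psi> (y j) + ereal ((1 + \<mu> * A j) / 2 * (norm (u - x j))\<^sup>2)"
    by (rule add_right_mono)
  also have "\<dots> \<le> ereal (A j * Gamma_real j u + (norm (u - x0))\<^sup>2 / 2)"
    by (rule Suc.IH)
  finally have prev: "A j * model j (y j) + (1 + \<mu> * A j) / 2 * (norm (u - x j))\<^sup>2
      \<le> A j * Gamma_real j u + (norm (u - x0))\<^sup>2 / 2"
    by simp
  have step: "A (Suc j) * (prox_value j + L / 2 * (norm (yt (Suc j) - xt j))\<^sup>2)
      + (1 + \<mu> * A (Suc j)) / 2 * (norm (u - x (Suc j)))\<^sup>2
      \<le> A j * model j (y j) + (1 + \<mu> * A j) / 2 * (norm (u - x j))\<^sup>2 + a j * model j u"
  proof -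
    have "L * (a j)\<^sup>2 = (1 + \<mu> * A j) * (A j + a j)"
      and "xt j = (A j / (A j + a j)) *\<^sub>R y j + (a j / (A j + a j)) *\<^sub>R x j"
      and "x (Suc j) = (1 / ((A j + a j) * \<mu> + 1)) *\<^sub>R
             (((L + \<mu>) * a j) *\<^sub>R yt (Suc j) - (A j * a j * L / (A j + a j)) *\<^sub>R y j)"
      using L_a_sq xt_def x_rec by (simp_all add: A_rec)
    from acg_step_bound[OF A_nonneg a_pos _ _ this] mu_pos L_pos show ?thesis
      by (simp add: A_rec)
  qed
  obtain p where p: "\<psi> (y (Suc j)) = ereal p"
    using model_le_psi[of j "y (Suc j)"] psi_y_Suc_le[of j] by (cases "\<psi> (y (Suc j))") auto
  have "A (Suc j) * p \<le> A (Suc j) * (prox_value j + L / 2 * (norm (yt (Suc j) - xt j))\<^sup>2)"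
    using psi_y_Suc_le[of j] A_Suc_pos[of j] unfolding p by simp
  moreover have "A (Suc j) * Gamma_real (Suc j) u = A j * Gamma_real j u + a j * model j u"
    using A_Suc_pos[of j] by simp
  ultimately have "A (Suc j) * p + (1 + \<mu> * A (Suc j)) / 2 * (norm (u - x (Suc j)))\<^sup>2
      \<le> A (Suc j) * Gamma_real (Suc j) u + (norm (u - x0))\<^sup>2 / 2"
    using prev step by linarith
  then show ?case unfolding p by simp
qed

lemma estimate_bound:
  "ereal (A j) * \<psi> (y j) \<le> (INF u. ereal (A j) * \<Gamma> j u + ereal ((norm (u - x0))\<^sup>2 / 2))"
proof (rule INF_greatest)
  fix u
  have "0 \<le> (1 + \<mu> * A j) / 2 * (norm (u - x j))\<^sup>2"
    using A_nonneg[of j] mu_pos by simp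
  then have "ereal (A j) * \<psi> (y j)
      \<le> ereal (A j) * \<psi> (y j) + ereal ((1 + \<mu> * A j) / 2 * (norm (u - x j))\<^sup>2)"
    by (intro add_increasing2) auto
  also have "\<dots> \<le> ereal (A j * Gamma_real j u + (norm (u - x0))\<^sup>2 / 2)"
    by (rule estimate_invariant)
  finally show "ereal (A j) * \<psi> (y j) \<le> ereal (A j) * \<Gamma> j u + ereal ((norm (u - x0))\<^sup>2 / 2)"
    by (simp add: Gamma_eq)
qed

end

theorem lemma2p3:
  fixes \<mu> L :: real
    and g :: "'a::euclidean_space \<Rightarrow> real" and G :: "'a \<Rightarrow> 'a"
    and h \<psi> :: "'a \<Rightarrow> ereal"
    and A \<tau> a :: "nat \<Rightarrow> real"
    and x y xt yt :: "nat \<Rightarrow> 'a"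
    and \<gamma> \<Gamma> :: "nat \<Rightarrow> 'a \<Rightarrow> ereal"
    and x0 :: 'a
  assumes mu_pos: "\<mu> > 0" and L_pos: "L > 0"
    and g_sc: "strongly_convex \<mu> g"
    and g_smooth: "smooth_with_grad (L + \<mu>) g G"
    and h_pcc: "proper_closed_convex h"
    and psi_def: "\<And>u. \<psi> u = ereal (g u) + h u"
    and A0: "A 0 = 0" and tau0: "\<tau> 0 = 1 / L" and y0: "y 0 = x0" and x0_def: "x 0 = x0"
    and a_def: "\<And>j. a j = (\<tau> j + sqrt ((\<tau> j)\<^sup>2 + 4 * \<tau> j * A j)) / 2"
    and tau_rec: "\<And>j. \<tau> (Suc j) = \<tau> j + \<mu> * a j / L"
    and A_rec: "\<And>j. A (Suc j) = A j + a j"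
    and xt_def: "\<And>j. xt j = (A j / A (Suc j)) *\<^sub>R y j + (a j / A (Suc j)) *\<^sub>R x j"
    and yt_min: "\<And>j u. ereal (lin g G (yt (Suc j)) (xt j)) + h (yt (Suc j))
                          + ereal ((L + \<mu>) / 2 * (norm (yt (Suc j) - xt j))\<^sup>2)
                        \<le> ereal (lin g G u (xt j)) + h u + ereal ((L + \<mu>) / 2 * (norm (u - xt j))\<^sup>2)"
    and y_rec: "\<And>j. y (Suc j) \<in> {y j, yt (Suc j)}
                   \<and> \<psi> (y (Suc j)) \<le> \<psi> (y j) \<and> \<psi> (y (Suc j)) \<le> \<psi> (yt (Suc j))"
    and x_rec: "\<And>j. x (Suc j) = (1 / (A (Suc j) * \<mu> + 1)) *\<^sub>R
                   (((L + \<mu>) * a j) *\<^sub>R yt (Suc j) - (A j * a j * L / A (Suc j)) *\<^sub>R y j)"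
    and gamma_def: "\<And>j u. \<gamma> j u =
                   ereal (lin g G (yt (Suc j)) (xt j)) + h (yt (Suc j))
                     + ereal (\<mu> / 2 * (norm (yt (Suc j) - xt j))\<^sup>2)
                     + ereal (L * ((xt j - yt (Suc j)) \<bullet> (u - yt (Suc j)))
                              + \<mu> / 2 * (norm (u - yt (Suc j)))\<^sup>2)"
    and Gamma0: "\<And>u. \<Gamma> 0 u = 0"
    and Gamma_rec: "\<And>j u. \<Gamma> (Suc j) u =
                   (ereal (A j) * \<Gamma> j u + ereal (a j) * \<gamma> j u) / ereal (A (Suc j))"
  shows "\<forall>j. ereal (A j) * \<psi> (y j)
             \<le> (INF u. ereal (A j) * \<Gamma> j u + ereal ((norm (u - x0))\<^sup>2 / 2))"
proof -
  interpret acg \<mu> L g G h \<psi> A \<tau> a x y xt yt \<gamma> \<Gamma> x0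
    by unfold_locales (use assms in blast)+
  show ?thesis using estimate_bound by blast
qed

end
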